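(* Let $g:\mathbb{R}^n\to\mathbb{R}$ be a multilinear polynomial of degree at most $d$, $g(x)=\sum_{|S|\leq d}\hat g(S)x_S$, and suppose there exists $S\subseteq N$ with $|S|=d$ and $|\hat g(S)|\geq 1$. Then for $x$ chosen uniformly at random from $[-1,1]^n$ and any $\epsilon>0$, $$\Pr_{x}\big[\,|g(x)|\leq\epsilon\,\big]\leq 2^d\sqrt{\epsilon}.$$
   Context: $N=\{1,\ldots,n\}$; for $S\subseteq N$ and $x\in\mathbb{R}^n$, $x_S=\prod_{i\in S}x_i$. A multilinear polynomial is written uniquely as $g(x)=\sum_{S\subseteq N}\hat g(S)x_S$. *)

theory Defs
  imports "HOL-Probability.Probability"
begin

definition mlpoly :: "nat \<Rightarrow> (nat set \<Rightarrow> real) \<Rightarrow> (nat \<Rightarrow> real) \<Rightarrow> real" where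
  "mlpoly n c x = (\<Sum>S\<in>Pow {1..n}. c S * (\<Prod>i\<in>S. x i))"

definition cube_measure :: "nat \<Rightarrow> (nat \<Rightarrow> real) measure" where
  "cube_measure n = PiM {1..n} (\<lambda>_. uniform_measure lborel {-1..1::real})"

end

theory Submission imports Defs begin

text \<open>Pick a coordinate \<open>j\<close> of a top-degree monomial and split
  \<open>g = x\<^sub>j h + k\<close>, where \<open>h\<close> and \<open>k\<close> do not depend on \<open>x\<^sub>j\<close> and \<open>h\<close> has degree \<open>d - 1\<close>
  with a top coefficient of absolute value at least 1. For fixed other coordinates,
  \<open>x\<^sub>j\<close> uniform on \<open>[-1,1]\<close> satisfies \<open>\<bar>x\<^sub>j h + k\<bar> \<le> \<epsilon>\<close> with probability at most
  \<open>min 1 (\<epsilon> / \<bar>h\<bar>)\<close>, the Lebesgue measure of \<open>{t \<in> (0,1]. \<bar>h\<bar> t \<le> \<epsilon>}\<close>. Exchanging the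
  integrals gives \<open>Pr[\<bar>g\<bar> \<le> \<epsilon>] \<le> \<integral>\<^sub>0\<^sup>1 Pr[\<bar>h\<bar> \<le> \<epsilon>/t] dt \<le> 2\<^sup>d\<^sup>-\<^sup>1 \<surd>\<epsilon> \<integral>\<^sub>0\<^sup>1 t\<^sup>-\<^sup>1\<^sup>/\<^sup>2 dt = 2\<^sup>d \<surd>\<epsilon>\<close>.\<close>

abbreviation uniform_pm1 :: "real measure" where
  "uniform_pm1 \<equiv> uniform_measure lborel {-1..1}"

abbreviation cube_on :: "nat set \<Rightarrow> (nat \<Rightarrow> real) measure" where
  "cube_on I \<equiv> PiM I (\<lambda>_. uniform_pm1)"

definition mlpoly_on :: "nat set \<Rightarrow> (nat set \<Rightarrow> real) \<Rightarrow> (nat \<Rightarrow> real) \<Rightarrow> real" where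
  "mlpoly_on I c x = (\<Sum>S\<in>Pow I. c S * (\<Prod>i\<in>S. x i))"

lemma prob_space_uniform_pm1: "prob_space uniform_pm1"
  by (rule prob_space_uniform_measure) auto

lemma prob_space_cube_on: "prob_space (cube_on I)"
  by (rule prob_space_PiM) (rule prob_space_uniform_pm1)

lemma product_prob_space_uniform_pm1: "product_prob_space (\<lambda>_. uniform_pm1)"
  unfolding product_prob_space_def product_prob_space_axioms_def product_sigma_finite_def
  using prob_space_uniform_pm1 prob_space_imp_sigma_finite by blast

lemma mlpoly_on_measurable[measurable]:
  "finite I \<Longrightarrow> mlpoly_on I c \<in> borel_measurable (cube_on I)"
  unfolding mlpoly_on_def by measurable auto

lemma mlpoly_on_const:
  assumes "finite I" and "\<forall>S\<subseteq>I. 0 < card S \<longrightarrow> c S = 0"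
  shows "mlpoly_on I c x = c {}"
proof -
  have "mlpoly_on I c x = (\<Sum>S\<in>{{}}. c S * (\<Prod>i\<in>S. x i))"
    unfolding mlpoly_on_def
    by (rule sum.mono_neutral_right)
       (use assms in \<open>auto simp: card_gt_0_iff dest: finite_subset\<close>)
  then show ?thesis by simp
qed

lemma mlpoly_on_insert_fun_upd:
  assumes "finite I" "j \<notin> I"
  shows "mlpoly_on (insert j I) c (x(j := y))
           = y * mlpoly_on I (\<lambda>S. c (insert j S)) x + mlpoly_on I c x"
proof -
  have fin: "finite (Pow I)" using assms by simp
  have disj: "Pow I \<inter> insert j ` Pow I = {}" using assms by auto
  have inj: "inj_on (insert j) (Pow I)"
    unfolding inj_on_def using assms by (metis PowD Diff_insert_absorb subsetD)
  have upd: "(\<Prod>i\<in>S. (x(j := y)) i) = (\<Prod>i\<in>S. x i)" if "S \<subseteq> I" for S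
    by (rule prod.cong) (use that assms in auto)
  have without_j: "(\<Sum>S\<in>Pow I. c S * (\<Prod>i\<in>S. (x(j := y)) i)) = mlpoly_on I c x"
    unfolding mlpoly_on_def by (rule sum.cong[OF refl]) (metis PowD upd)
  have "(\<Sum>S\<in>insert j ` Pow I. c S * (\<Prod>i\<in>S. (x(j := y)) i))
      = (\<Sum>S\<in>Pow I. c (insert j S) * (\<Prod>i\<in>insert j S. (x(j := y)) i))"
    by (simp add: sum.reindex[OF inj])
  also have "\<dots> = (\<Sum>S\<in>Pow I. y * (c (insert j S) * (\<Prod>i\<in>S. x i)))"
  proof (rule sum.cong[OF refl])
    fix S assume S: "S \<in> Pow I"
    then have "finite S" "j \<notin> S" using assms finite_subset by auto
    then show "c (insert j S) * (\<Prod>i\<in>insert j S. (x(j := y)) i)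
                 = y * (c (insert j S) * (\<Prod>i\<in>S. x i))"
      using upd S by simp
  qed
  finally have with_j: "(\<Sum>S\<in>insert j ` Pow I. c S * (\<Prod>i\<in>S. (x(j := y)) i))
                          = y * mlpoly_on I (\<lambda>S. c (insert j S)) x"
    by (simp add: mlpoly_on_def sum_distrib_left)
  show ?thesis
    unfolding mlpoly_on_def[of "insert j I"] Pow_insert
      sum.union_disjoint[OF fin finite_imageI[OF fin] disj] without_j with_j
    by simp
qed

lemma emeasure_uniform_pm1_affine_le:
  fixes a b \<epsilon> :: real
  assumes "\<epsilon> > 0"
  shows "emeasure uniform_pm1 {y. \<bar>y * a + b\<bar> \<le> \<epsilon>}
           \<le> emeasure lborel {t\<in>{0<..1}. \<bar>a\<bar> * t \<le> \<epsilon>}"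
proof (cases "\<bar>a\<bar> \<le> \<epsilon>")
  case True
  have "{t\<in>{0<..1}. \<bar>a\<bar> * t \<le> \<epsilon>} = {0<..1::real}"
  proof safe
    fix t :: real assume "t \<in> {0<..1}"
    then have "\<bar>a\<bar> * t \<le> \<bar>a\<bar> * 1" by (intro mult_left_mono) auto
    then show "\<bar>a\<bar> * t \<le> \<epsilon>" using True by simp
  qed
  then have "emeasure lborel {t\<in>{0<..1}. \<bar>a\<bar> * t \<le> \<epsilon>} = 1" by simp
  then show ?thesis
    using prob_space.emeasure_le_1[OF prob_space_uniform_pm1, of "{y. \<bar>y * a + b\<bar> \<le> \<epsilon>}"]
    by (simp only:)
next
  case False
  then have a: "\<bar>a\<bar> > 0" using assms by auto
  define r where "r = \<epsilon> / \<bar>a\<bar>"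
  define m where "m = - b / a"
  have r: "0 < r" "r \<le> 1" using a assms False by (simp_all add: r_def)
  have scale: "\<And>s. \<bar>a\<bar> * s \<le> \<epsilon> \<longleftrightarrow> s \<le> r"
    using pos_le_divide_eq[OF a] by (auto simp: r_def mult.commute)
  have "{t\<in>{0<..1}. \<bar>a\<bar> * t \<le> \<epsilon>} = {0<..r}"
    by (rule set_eqI) (use scale r in auto)
  then have rhs: "emeasure lborel {t\<in>{0<..1}. \<bar>a\<bar> * t \<le> \<epsilon>} = ennreal r" using r by simp
  have sub: "{y. \<bar>y * a + b\<bar> \<le> \<epsilon>} \<subseteq> {m - r .. m + r}"
  proof
    fix y assume "y \<in> {y. \<bar>y * a + b\<bar> \<le> \<epsilon>}"
    moreover have "a * (y - m) = y * a + b" using a by (simp add: m_def algebra_simps)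
    ultimately have "\<bar>a\<bar> * \<bar>y - m\<bar> \<le> \<epsilon>" by (metis abs_mult mem_Collect_eq)
    then have "\<bar>y - m\<bar> \<le> r" using scale by blast
    then show "y \<in> {m - r .. m + r}" by auto
  qed
  have "emeasure uniform_pm1 {y. \<bar>y * a + b\<bar> \<le> \<epsilon>}
          = emeasure lborel ({-1..1} \<inter> {y. \<bar>y * a + b\<bar> \<le> \<epsilon>}) / 2"
    by (subst emeasure_uniform_measure) auto
  also have "\<dots> \<le> emeasure lborel {m - r .. m + r} / 2"
    by (intro divide_right_mono_ennreal emeasure_mono) (use sub in auto)
  also have "\<dots> = ennreal (2 * r) / 2" using r by simp
  also have "\<dots> = ennreal r"
    using divide_ennreal[of "2 * r" 2] r
    by (simp add: ennreal_numeral[symmetric] del: ennreal_numeral)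
  finally show ?thesis using rhs by simp
qed

lemma nn_integral_powr_minus_half:
  "(\<integral>\<^sup>+ t. ennreal (t powr (-1/2)) * indicator {0..1::real} t \<partial>lborel) = 2"
proof -
  have "((\<lambda>t::real. t powr (-1/2)) has_integral (1 powr (-1/2 + 1) / (-1/2 + 1))) {0..1}"
    by (rule has_integral_powr_from_0) auto
  then have "((\<lambda>t::real. t powr (-1/2)) has_integral 2) {0..1}" by simp
  from nn_integral_has_integral_lebesgue'[OF _ this] show ?thesis by simp
qed

lemma nn_integral_sqrt_small_ball_le:
  fixes F :: "real \<Rightarrow> ennreal"
  assumes F: "\<And>\<delta>. \<delta> > 0 \<Longrightarrow> F \<delta> \<le> ennreal (B * sqrt \<delta>)"
    and "B \<ge> 0" "\<epsilon> > 0"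
  shows "(\<integral>\<^sup>+ t. F (\<epsilon> / t) * indicator {0<..1} t \<partial>lborel) \<le> ennreal (2 * B * sqrt \<epsilon>)"
proof -
  have "(\<integral>\<^sup>+ t. F (\<epsilon> / t) * indicator {0<..1} t \<partial>lborel)
          \<le> (\<integral>\<^sup>+ t. ennreal (B * sqrt \<epsilon>) * (ennreal (t powr (-1/2)) * indicator {0..1} t) \<partial>lborel)"
  proof (rule nn_integral_mono)
    fix t :: real
    show "F (\<epsilon> / t) * indicator {0<..1} t
            \<le> ennreal (B * sqrt \<epsilon>) * (ennreal (t powr (-1/2)) * indicator {0..1} t)"
    proof (cases "t \<in> {0<..1}")
      case True
      have "F (\<epsilon> / t) \<le> ennreal (B * sqrt (\<epsilon> / t))" using F True assms by simp
      also have "B * sqrt (\<epsilon> / t) = B * sqrt \<epsilon> * t powr (-1/2)"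
        using True by (simp add: real_sqrt_divide powr_minus powr_half_sqrt divide_simps)
      finally show ?thesis using True assms by (simp add: ennreal_mult)
    qed simp
  qed
  also have "\<dots> = ennreal (B * sqrt \<epsilon>) * 2"
    using nn_integral_powr_minus_half by (simp add: nn_integral_cmult)
  also have "\<dots> = ennreal (2 * B * sqrt \<epsilon>)"
    using assms by (simp add: ennreal_mult mult_ac)
  finally show ?thesis .
qed

lemma nn_integral_indicator_abs_mult_le:
  fixes h :: "'a \<Rightarrow> real"
  assumes [measurable]: "h \<in> borel_measurable M"
  shows "(\<integral>\<^sup>+ x. indicator {t\<in>{0<..1}. \<bar>h x\<bar> * t \<le> \<epsilon>} t \<partial>M)
           = emeasure M {x\<in>space M. \<bar>h x\<bar> \<le> \<epsilon> / t} * indicator {0<..1} t"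
proof (cases "t \<in> {0<..1}")
  case True
  then have "indicator {t\<in>{0<..1}. \<bar>h x\<bar> * t \<le> \<epsilon>} t
               = (indicator {x\<in>space M. \<bar>h x\<bar> \<le> \<epsilon> / t} x :: ennreal)"
    if "x \<in> space M" for x
    using that by (simp add: indicator_def pos_le_divide_eq)
  then have "(\<integral>\<^sup>+ x. indicator {t\<in>{0<..1}. \<bar>h x\<bar> * t \<le> \<epsilon>} t \<partial>M)
               = (\<integral>\<^sup>+ x. indicator {x\<in>space M. \<bar>h x\<bar> \<le> \<epsilon> / t} x \<partial>M)"
    by (rule nn_integral_cong)
  then show ?thesis using True by simp
next
  case False
  then show ?thesis by (auto simp: indicator_def)
qed

lemma emeasure_cube_insert_small_le:
  fixes c :: "nat set \<Rightarrow> real"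
  assumes I: "finite I" "j \<notin> I" and "\<epsilon> > 0"
  defines "h \<equiv> mlpoly_on I (\<lambda>S. c (insert j S))"
  shows "emeasure (cube_on (insert j I))
           {x\<in>space (cube_on (insert j I)). \<bar>mlpoly_on (insert j I) c x\<bar> \<le> \<epsilon>}
         \<le> (\<integral>\<^sup>+ t. emeasure (cube_on I) {x\<in>space (cube_on I). \<bar>h x\<bar> \<le> \<epsilon> / t}
                      * indicator {0<..1} t \<partial>lborel)"
proof -
  interpret P: product_prob_space "\<lambda>_. uniform_pm1" "insert j I"
    by (rule product_prob_space_uniform_pm1)
  interpret PS: pair_sigma_finite "cube_on I" lborel
    unfolding pair_sigma_finite_def
    using prob_space_imp_sigma_finite[OF prob_space_cube_on] lborel.sigma_finite_measure_axioms
    by blast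
  define A where "A = {x\<in>space (cube_on (insert j I)). \<bar>mlpoly_on (insert j I) c x\<bar> \<le> \<epsilon>}"
  define f where "f = (\<lambda>x t. indicator {t\<in>{0<..1}. \<bar>h x\<bar> * t \<le> \<epsilon>} t :: ennreal)"
  have [measurable]: "h \<in> borel_measurable (cube_on I)" "A \<in> sets (cube_on (insert j I))"
    using I by (auto simp: h_def A_def)
  have f_measurable: "case_prod f \<in> borel_measurable (cube_on I \<Otimes>\<^sub>M lborel)"
    unfolding f_def by measurable
  have fiber: "(\<integral>\<^sup>+ y. indicator A (x(j := y)) \<partial>uniform_pm1) \<le> (\<integral>\<^sup>+ t. f x t \<partial>lborel)"
    if x: "x \<in> space (cube_on I)" for x
  proof -
    have "x(j := y) \<in> space (cube_on (insert j I))" for y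
      using x by (auto simp: space_PiM PiE_def extensional_def)
    then have "indicator A (x(j := y)) = (indicator {y. \<bar>y * h x + mlpoly_on I c x\<bar> \<le> \<epsilon>} y :: ennreal)" for y
      unfolding A_def h_def using mlpoly_on_insert_fun_upd[OF I, of c x y] by (simp add: indicator_def)
    then have "(\<integral>\<^sup>+ y. indicator A (x(j := y)) \<partial>uniform_pm1)
                 = emeasure uniform_pm1 {y. \<bar>y * h x + mlpoly_on I c x\<bar> \<le> \<epsilon>}"
      by simp
    also have "\<dots> \<le> emeasure lborel {t\<in>{0<..1}. \<bar>h x\<bar> * t \<le> \<epsilon>}"
      by (rule emeasure_uniform_pm1_affine_le) fact
    finally show ?thesis by (simp add: f_def)
  qed
  have layer: "(\<integral>\<^sup>+ x. f x t \<partial>cube_on I)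
                 = emeasure (cube_on I) {x\<in>space (cube_on I). \<bar>h x\<bar> \<le> \<epsilon> / t} * indicator {0<..1} t"
    for t :: real
    unfolding f_def by (rule nn_integral_indicator_abs_mult_le) measurable
  have "emeasure (cube_on (insert j I)) A = (\<integral>\<^sup>+ x. indicator A x \<partial>cube_on (insert j I))"
    by simp
  also have "\<dots> = (\<integral>\<^sup>+ x. (\<integral>\<^sup>+ y. indicator A (x(j := y)) \<partial>uniform_pm1) \<partial>cube_on I)"
    by (rule P.product_nn_integral_insert) (use I in auto)
  also have "\<dots> \<le> (\<integral>\<^sup>+ x. (\<integral>\<^sup>+ t. f x t \<partial>lborel) \<partial>cube_on I)"
    by (rule nn_integral_mono) (rule fiber)
  also have "\<dots> = (\<integral>\<^sup>+ t. (\<integral>\<^sup>+ x. f x t \<partial>cube_on I) \<partial>lborel)"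
    using PS.Fubini'[OF f_measurable] by simp
  finally show ?thesis unfolding A_def layer .
qed

lemma emeasure_cube_mlpoly_small_le:
  assumes "finite I"
    and "\<forall>S\<subseteq>I. d < card S \<longrightarrow> c S = 0"
    and "\<exists>S\<subseteq>I. card S = d \<and> \<bar>c S\<bar> \<ge> 1"
    and "\<epsilon> > 0"
  shows "emeasure (cube_on I) {x\<in>space (cube_on I). \<bar>mlpoly_on I c x\<bar> \<le> \<epsilon>}
           \<le> ennreal (2 ^ d * sqrt \<epsilon>)"
  using assms
proof (induction d arbitrary: I c \<epsilon>)
  case 0
  then have "\<bar>c {}\<bar> \<ge> 1" by (metis card_0_eq finite_subset)
  moreover have "mlpoly_on I c x = c {}" for x
    using 0 by (intro mlpoly_on_const) auto
  ultimately have empty: "{x\<in>space (cube_on I). \<bar>mlpoly_on I c x\<bar> \<le> \<epsilon>} = {}" if "\<epsilon> < 1"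
    using that by auto
  show ?case
  proof (cases "\<epsilon> < 1")
    case False
    have "emeasure (cube_on I) {x\<in>space (cube_on I). \<bar>mlpoly_on I c x\<bar> \<le> \<epsilon>} \<le> 1"
      by (rule prob_space.emeasure_le_1[OF prob_space_cube_on])
    also have "\<dots> \<le> ennreal (2 ^ 0 * sqrt \<epsilon>)" using False by simp
    finally show ?thesis .
  qed (simp add: empty)
next
  case (Suc d)
  from Suc.prems(3) obtain T where T: "T \<subseteq> I" "card T = Suc d" "\<bar>c T\<bar> \<ge> 1" by blast
  then obtain j where j: "j \<in> T" by fastforce
  define I' where "I' = I - {j}"
  have I': "I = insert j I'" "j \<notin> I'" "finite I'"
    using j T Suc.prems(1) by (auto simp: I'_def)
  have "\<forall>S\<subseteq>I'. d < card S \<longrightarrow> c (insert j S) = 0"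
  proof safe
    fix S assume S: "S \<subseteq> I'" "d < card S"
    then have "card (insert j S) = Suc (card S)"
      using I' by (metis card_insert_disjoint finite_subset subsetD)
    moreover have "insert j S \<subseteq> I" using S I' by auto
    ultimately show "c (insert j S) = 0" using Suc.prems(2) S(2) by auto
  qed
  moreover have "\<exists>S\<subseteq>I'. card S = d \<and> 1 \<le> \<bar>c (insert j S)\<bar>"
  proof (intro exI conjI)
    show "T - {j} \<subseteq> I'" using T by (auto simp: I'_def)
    show "card (T - {j}) = d" using T j by (simp add: card_Diff_singleton_if)
    show "1 \<le> \<bar>c (insert j (T - {j}))\<bar>" using T j by (simp add: insert_absorb)
  qed
  ultimately have small_h:
    "emeasure (cube_on I') {x\<in>space (cube_on I'). \<bar>mlpoly_on I' (\<lambda>S. c (insert j S)) x\<bar> \<le> \<delta>}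
       \<le> ennreal (2 ^ d * sqrt \<delta>)" if "\<delta> > 0" for \<delta>
    using that by (rule Suc.IH[OF I'(3)])
  have "emeasure (cube_on I) {x\<in>space (cube_on I). \<bar>mlpoly_on I c x\<bar> \<le> \<epsilon>}
          \<le> ennreal (2 * 2 ^ d * sqrt \<epsilon>)"
    unfolding I'(1)
    by (rule order_trans[OF emeasure_cube_insert_small_le[OF I'(3,2) Suc.prems(4)]
                            nn_integral_sqrt_small_ball_le[OF small_h _ Suc.prems(4)]]) auto
  then show ?case by simp
qed

theorem lemma2:
  fixes n d :: nat and c :: "nat set \<Rightarrow> real" and \<epsilon> :: real
  assumes deg: "\<forall>S\<subseteq>{1..n}. d < card S \<longrightarrow> c S = 0"
    and top: "\<exists>S\<subseteq>{1..n}. card S = d \<and> \<bar>c S\<bar> \<ge> 1"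
    and eps: "\<epsilon> > 0"
  shows "measure (cube_measure n) {x \<in> space (cube_measure n). \<bar>mlpoly n c x\<bar> \<le> \<epsilon>}
           \<le> 2 ^ d * sqrt \<epsilon>"
proof -
  interpret P: prob_space "cube_on {1..n}" by (rule prob_space_cube_on)
  have "mlpoly n c = mlpoly_on {1..n} c" by (simp add: fun_eq_iff mlpoly_def mlpoly_on_def)
  moreover have "emeasure (cube_on {1..n}) {x\<in>space (cube_on {1..n}). \<bar>mlpoly_on {1..n} c x\<bar> \<le> \<epsilon>}
                   \<le> ennreal (2 ^ d * sqrt \<epsilon>)"
    by (rule emeasure_cube_mlpoly_small_le) (use assms in auto)
  ultimately show ?thesis
    unfolding cube_measure_def P.emeasure_eq_measure using eps by (simp add: ennreal_le_iff)
qed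

end
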